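(* There exists an online Fisher market instance (a number of goods $m$, a per-user capacity vector $\mathbf{d}>\mathbf{0}$ with capacities $\mathbf{c}=n\mathbf{d}$, and a distribution $\mathcal{D}$ of budget–utility pairs) such that, for every static pricing algorithm $\boldsymbol{\pi}$ (i.e., one that posts the same price vector $\mathbf{p}^t=\mathbf{p}$ to all users $t\in[n]$), either the expected regret $R_n(\boldsymbol{\pi})$ or the expected constraint violation $V_n(\boldsymbol{\pi})$ is $\Omega(\sqrt{n})$, where $n$ is the number of arriving users.
   Context: Online Fisher market: there are $m$ divisible goods, good $j$ having capacity $c_j=nd_j$ with $d_j>0$, and $n$ users arriving sequentially. User $t$ has a budget $w_t>0$ and a utility vector $\mathbf{u}_t\in\mathbb{R}^m_{\ge 0}$, and the pairs $(w_t,\mathbf{u}_t)$ are drawn i.i.d. from a distribution $\mathcal{D}$ with bounded support. Given a posted price vector $\mathbf{p}^t$, user $t$ consumes a bundle $\mathbf{x}_t$ that is an optimal solution of $\max_{\mathbf{x}\in\mathbb{R}^m}\ \mathbf{u}_t^\top\mathbf{x}$ subject to $(\mathbf{p}^t)^\top\mathbf{x}\le w_t$, $\mathbf{x}\ge\mathbf{0}$. A pricing policy $\boldsymbol{\pi}$ chooses $\mathbf{p}^t$ for each user. The offline optimum is $U_n^*=\max\{\sum_{t=1}^n w_t\log(\sum_{j}u_{tj}x_{tj}) : \sum_{t}x_{tj}\le c_j\ \forall j,\ x_{tj}\ge 0\}$ (Eisenberg–Gale program), the online objective is $U_n(\boldsymbol{\pi})=\sum_{t=1}^n w_t\log(\mathbf{u}_t^\top\mathbf{x}_t)$,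 the expected regret is $R_n(\boldsymbol{\pi})=\mathbb{E}[U_n^*-U_n(\boldsymbol{\pi})]$ and the expected constraint violation is $V_n(\boldsymbol{\pi})=\mathbb{E}[\|(\sum_{t=1}^n\mathbf{x}_t-\mathbf{c})_+\|_2]$, expectations over $\mathcal{D}$. Asymptotic notation refers to $n\to\infty$ with the instance parameters $m,\mathbf{d},\mathcal{D}$ fixed. *)

theory Defs
  imports "HOL-Probability.Probability" "HOL-Library.Landau_Symbols"
begin

text \<open>Vectors in R^m are represented as functions nat => real; only the
  components j < m are meaningful.\<close>

definition dotp :: "nat \<Rightarrow> (nat \<Rightarrow> real) \<Rightarrow> (nat \<Rightarrow> real) \<Rightarrow> real" where
  "dotp m a b = (\<Sum>j<m. a j * b j)"

definition affordable :: "nat \<Rightarrow> (nat \<Rightarrow> real) \<Rightarrow> real \<Rightarrow> (nat \<Rightarrow> real) \<Rightarrow> bool" where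
  "affordable m p w x \<longleftrightarrow> (\<forall>j<m. x j \<ge> 0) \<and> dotp m p x \<le> w"

definition user_optimal ::
  "nat \<Rightarrow> (nat \<Rightarrow> real) \<Rightarrow> real \<Rightarrow> (nat \<Rightarrow> real) \<Rightarrow> (nat \<Rightarrow> real) \<Rightarrow> bool" where
  "user_optimal m p w u x \<longleftrightarrow>
     affordable m p w x \<and> (\<forall>y. affordable m p w y \<longrightarrow> dotp m u y \<le> dotp m u x)"

definition valid_instance :: "nat \<Rightarrow> (nat \<Rightarrow> real) \<Rightarrow> (real \<times> (nat \<Rightarrow> real)) pmf \<Rightarrow> bool" where
  "valid_instance m d D \<longleftrightarrow> m \<ge> 1 \<and> (\<forall>j<m. d j > 0) \<and> finite (set_pmf D) \<and>
     (\<forall>(w, u) \<in> set_pmf D. w > 0 \<and> (\<forall>j<m. u j \<ge> 0) \<and> (\<exists>j<m. u j > 0))"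

text \<open>A user response (tie-breaking) rule: maps (p, w, u) to a bundle, which must be
  an optimal bundle whenever an optimal bundle exists.\<close>
definition valid_response ::
  "nat \<Rightarrow> ((nat \<Rightarrow> real) \<Rightarrow> real \<Rightarrow> (nat \<Rightarrow> real) \<Rightarrow> (nat \<Rightarrow> real)) \<Rightarrow> bool" where
  "valid_response m sel \<longleftrightarrow>
     (\<forall>p w u. (\<exists>x. user_optimal m p w u x) \<longrightarrow> user_optimal m p w u (sel p w u))"

text \<open>A price vector p >= 0 for which every user type in the support has an optimal bundle
  (so that the users' behaviour is well defined).\<close>
definition admissible_price :: "nat \<Rightarrow> (real \<times> (nat \<Rightarrow> real)) pmf \<Rightarrow> (nat \<Rightarrow> real) \<Rightarrow> bool" where
  "admissible_price m D p \<longleftrightarrow> (\<forall>j<m. p j \<ge> 0) \<and>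
     (\<forall>(w, u) \<in> set_pmf D. \<exists>x. user_optimal m p w u x)"

definition arrivals :: "nat \<Rightarrow> (real \<times> (nat \<Rightarrow> real)) pmf \<Rightarrow> (nat \<Rightarrow> real \<times> (nat \<Rightarrow> real)) pmf" where
  "arrivals n D = Pi_pmf {..<n} undefined (\<lambda>_. D)"

text \<open>Offline optimum of the Eisenberg-Gale program with capacities c
  (allocations with zero utility for some user have objective -infinity and are excluded).\<close>
definition offline_opt ::
  "nat \<Rightarrow> (nat \<Rightarrow> real) \<Rightarrow> nat \<Rightarrow> (nat \<Rightarrow> real \<times> (nat \<Rightarrow> real)) \<Rightarrow> real" where
  "offline_opt m c n \<omega> = Sup {\<Sum>t<n. fst (\<omega> t) * ln (dotp m (snd (\<omega> t)) (X t)) | X.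
       (\<forall>t<n. \<forall>j<m. X t j \<ge> 0) \<and> (\<forall>j<m. (\<Sum>t<n. X t j) \<le> c j) \<and>
       (\<forall>t<n. dotp m (snd (\<omega> t)) (X t) > 0)}"

definition consumed ::
  "((nat \<Rightarrow> real) \<Rightarrow> real \<Rightarrow> (nat \<Rightarrow> real) \<Rightarrow> (nat \<Rightarrow> real)) \<Rightarrow> (nat \<Rightarrow> real) \<Rightarrow>
   (nat \<Rightarrow> real \<times> (nat \<Rightarrow> real)) \<Rightarrow> nat \<Rightarrow> (nat \<Rightarrow> real)" where
  "consumed sel p \<omega> t = sel p (fst (\<omega> t)) (snd (\<omega> t))"

definition online_obj ::
  "nat \<Rightarrow> nat \<Rightarrow> ((nat \<Rightarrow> real) \<Rightarrow> real \<Rightarrow> (nat \<Rightarrow> real) \<Rightarrow> (nat \<Rightarrow> real)) \<Rightarrow> (nat \<Rightarrow> real) \<Rightarrow>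
   (nat \<Rightarrow> real \<times> (nat \<Rightarrow> real)) \<Rightarrow> real" where
  "online_obj m n sel p \<omega> = (\<Sum>t<n. fst (\<omega> t) * ln (dotp m (snd (\<omega> t)) (consumed sel p \<omega> t)))"

definition regret ::
  "nat \<Rightarrow> (nat \<Rightarrow> real) \<Rightarrow> (real \<times> (nat \<Rightarrow> real)) pmf \<Rightarrow> nat \<Rightarrow>
   ((nat \<Rightarrow> real) \<Rightarrow> real \<Rightarrow> (nat \<Rightarrow> real) \<Rightarrow> (nat \<Rightarrow> real)) \<Rightarrow> (nat \<Rightarrow> real) \<Rightarrow> real" where
  "regret m d D n sel p = measure_pmf.expectation (arrivals n D)
     (\<lambda>\<omega>. offline_opt m (\<lambda>j. real n * d j) n \<omega> - online_obj m n sel p \<omega>)"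

definition violation ::
  "nat \<Rightarrow> (nat \<Rightarrow> real) \<Rightarrow> (real \<times> (nat \<Rightarrow> real)) pmf \<Rightarrow> nat \<Rightarrow>
   ((nat \<Rightarrow> real) \<Rightarrow> real \<Rightarrow> (nat \<Rightarrow> real) \<Rightarrow> (nat \<Rightarrow> real)) \<Rightarrow> (nat \<Rightarrow> real) \<Rightarrow> real" where
  "violation m d D n sel p = measure_pmf.expectation (arrivals n D)
     (\<lambda>\<omega>. sqrt (\<Sum>j<m. (max 0 ((\<Sum>t<n. consumed sel p \<omega> t j) - real n * d j))\<^sup>2))"

end

theory Submission
  imports Defs
begin

text \<open>
  Take a single good with per-user capacity 2, unit utilities, and budgets 1 or 3 with
  probability 1/2 each. A user facing the price P spends her whole budget, so the total demand
  is S/P, where S = 2n + Z and Z is a simple random walk with n steps.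
  If P exceeds 1 + 1/(36 sqrt n), the allocation proportional to the budgets beats the online
  objective by S ln(2nP/S), whose expectation is of order sqrt n. Otherwise the demand exceeds
  the capacity 2n by roughly max(Z, 0), and E max(Z, 0) is of order sqrt n because
  E Z^2 = n while E Z^4 \<le> 3 n^2.
\<close>

lemma dotp_one [simp]: "dotp 1 a b = a 0 * b 0" "dotp (Suc 0) a b = a 0 * b 0"
  by (simp_all add: dotp_def)

lemma dotp_add_unit:
  assumes "j < m"
  shows "dotp m a (x(j := x j + 1)) = dotp m a x + a j"
proof -
  have "(\<Sum>i<m. a i * (x(j := x j + 1)) i) = (\<Sum>i<m. a i * x i + (if i = j then a i else 0))"
    by (rule sum.cong) (auto simp: algebra_simps)
  then show ?thesis
    using assms by (simp add: dotp_def sum.distrib)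
qed

lemma user_optimal_price_pos:
  assumes opt: "user_optimal m p w u x" and "j < m" "u j > 0"
  shows "p j > 0"
proof (rule ccontr)
  assume "\<not> p j > 0"
  then have "affordable m p w (x(j := x j + 1))"
    using opt \<open>j < m\<close> by (auto simp: user_optimal_def affordable_def dotp_add_unit)
  then have "dotp m u (x(j := x j + 1)) \<le> dotp m u x"
    using opt by (simp add: user_optimal_def)
  then show False
    using \<open>j < m\<close> \<open>u j > 0\<close> by (simp add: dotp_add_unit)
qed

lemma user_optimal_one_good_iff:
  assumes "p 0 > 0" "u 0 > 0" "w \<ge> 0"
  shows "user_optimal 1 p w u x \<longleftrightarrow> x 0 = w / p 0"
proof
  assume opt: "user_optimal 1 p w u x"
  have "affordable 1 p w (\<lambda>_. w / p 0)"
    using assms by (simp add: affordable_def)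
  then have "u 0 * (w / p 0) \<le> u 0 * x 0"
    using opt by (auto simp: user_optimal_def)
  moreover have "p 0 * x 0 \<le> w"
    using opt by (simp add: user_optimal_def affordable_def)
  ultimately show "x 0 = w / p 0"
    using assms by (simp add: field_simps)
next
  assume x: "x 0 = w / p 0"
  have "u 0 * y 0 \<le> u 0 * x 0" if "affordable 1 p w y" for y
  proof -
    have "y 0 \<le> w / p 0"
      using that assms by (simp add: affordable_def pos_le_divide_eq mult.commute)
    then have "u 0 * y 0 \<le> u 0 * (w / p 0)"
      by (rule mult_left_mono) (use \<open>u 0 > 0\<close> in simp)
    then show ?thesis
      using x by simp
  qed
  then show "user_optimal 1 p w u x"
    using assms x by (simp add: user_optimal_def affordable_def)
qed

lemma valid_response_one_good:
  assumes sel: "valid_response 1 sel" and "p 0 > 0" "u 0 > 0" "w \<ge> 0"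
  shows "sel p w u 0 = w / p 0"
proof -
  have "user_optimal 1 p w u (\<lambda>_. w / p 0)"
    using user_optimal_one_good_iff[of p u w] assms by simp
  then have "user_optimal 1 p w u (sel p w u)"
    using sel unfolding valid_response_def by blast
  then show ?thesis
    using user_optimal_one_good_iff[of p u w] assms by simp
qed

definition eisenberg_gale_values :: "nat \<Rightarrow> (nat \<Rightarrow> real) \<Rightarrow> nat \<Rightarrow> (nat \<Rightarrow> real \<times> (nat \<Rightarrow> real)) \<Rightarrow> real set" where
  "eisenberg_gale_values m c n \<omega> = {\<Sum>t<n. fst (\<omega> t) * ln (dotp m (snd (\<omega> t)) (X t)) | X.
       (\<forall>t<n. \<forall>j<m. X t j \<ge> 0) \<and> (\<forall>j<m. (\<Sum>t<n. X t j) \<le> c j) \<and>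
       (\<forall>t<n. dotp m (snd (\<omega> t)) (X t) > 0)}"

lemma offline_opt_eq_Sup_eisenberg_gale_values: "offline_opt m c n \<omega> = Sup (eisenberg_gale_values m c n \<omega>)"
  by (simp add: offline_opt_def eisenberg_gale_values_def)

lemma eisenberg_gale_values_one_good_le:
  assumes "v \<in> eisenberg_gale_values 1 c n \<omega>"
    and budget_nonneg: "\<And>t. t < n \<Longrightarrow> fst (\<omega> t) \<ge> 0"
    and unit_utility: "\<And>t. t < n \<Longrightarrow> snd (\<omega> t) 0 = 1"
  shows "v \<le> (\<Sum>t<n. fst (\<omega> t) * ln (c 0))"
proof -
  obtain X where v: "v = (\<Sum>t<n. fst (\<omega> t) * ln (X t 0))"
    and X_pos: "\<And>t. t < n \<Longrightarrow> X t 0 > 0" and X_cap: "(\<Sum>t<n. X t 0) \<le> c 0"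
    using assms(1) unit_utility by (auto simp: eisenberg_gale_values_def)
  have "fst (\<omega> t) * ln (X t 0) \<le> fst (\<omega> t) * ln (c 0)" if "t < n" for t
  proof -
    have "X t 0 \<le> (\<Sum>t<n. X t 0)"
      using X_pos that by (intro member_le_sum) (simp_all add: less_imp_le)
    then have "ln (X t 0) \<le> ln (c 0)"
      using X_cap X_pos[OF that] by (subst ln_le_cancel_iff) auto
    then show ?thesis
      using budget_nonneg[OF that] by (rule mult_left_mono)
  qed
  then show ?thesis
    unfolding v by (intro sum_mono) simp
qed

lemma offline_opt_one_good_ge:
  assumes "c 0 > 0"
    and budget_pos: "\<And>t. t < n \<Longrightarrow> fst (\<omega> t) > 0"
    and unit_utility: "\<And>t. t < n \<Longrightarrow> snd (\<omega> t) 0 = 1"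
  shows "(\<Sum>t<n. fst (\<omega> t) * ln (c 0 * fst (\<omega> t) / (\<Sum>t<n. fst (\<omega> t)))) \<le> offline_opt 1 c n \<omega>"
proof -
  let ?S = "\<Sum>t<n. fst (\<omega> t)"
  define X where "X = (\<lambda>t (j::nat). c 0 * fst (\<omega> t) / ?S)"
  have "?S > 0" if "t < n" for t
    using that budget_pos by (intro sum_pos2[of _ t]) (auto intro: less_imp_le)
  then have X_pos: "X t 0 > 0" if "t < n" for t
    using that budget_pos \<open>c 0 > 0\<close> by (simp add: X_def)
  have "(\<Sum>t<n. X t 0) = c 0 * ?S / ?S"
    unfolding X_def sum_divide_distrib[symmetric] sum_distrib_left ..
  also have "\<dots> \<le> c 0"
    using \<open>c 0 > 0\<close> by (cases "?S = 0") simp_all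
  finally have mem: "(\<Sum>t<n. fst (\<omega> t) * ln (dotp 1 (snd (\<omega> t)) (X t))) \<in> eisenberg_gale_values 1 c n \<omega>"
    using X_pos unit_utility unfolding eisenberg_gale_values_def by (auto intro: less_imp_le)
  have bdd: "bdd_above (eisenberg_gale_values 1 c n \<omega>)"
    using budget_pos unit_utility
    by (intro bdd_aboveI[where M = "\<Sum>t<n. fst (\<omega> t) * ln (c 0)"] eisenberg_gale_values_one_good_le)
      (auto intro: less_imp_le)
  have "(\<Sum>t<n. fst (\<omega> t) * ln (dotp 1 (snd (\<omega> t)) (X t))) =
      (\<Sum>t<n. fst (\<omega> t) * ln (c 0 * fst (\<omega> t) / ?S))"
    using unit_utility by (intro sum.cong) (simp_all add: X_def)
  then show ?thesis
    using cSup_upper[OF mem bdd] unfolding offline_opt_eq_Sup_eisenberg_gale_values by simp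
qed

lemma set_pmf_arrivals:
  assumes "\<omega> \<in> set_pmf (arrivals n D)" "t < n"
  shows "\<omega> t \<in> set_pmf D"
  using assms set_Pi_pmf_subset'[of "{..<n}" undefined "\<lambda>_. D"]
  by (auto simp: arrivals_def PiE_dflt_def)

lemma finite_set_pmf_arrivals:
  assumes "finite (set_pmf D)"
  shows "finite (set_pmf (arrivals n D))"
proof (rule finite_subset)
  show "set_pmf (arrivals n D) \<subseteq> PiE_dflt {..<n} undefined (set_pmf \<circ> (\<lambda>_. D))"
    unfolding arrivals_def by (rule set_Pi_pmf_subset') simp
  show "finite (PiE_dflt {..<n} undefined (set_pmf \<circ> (\<lambda>_. D)))"
    using assms by (intro finite_PiE_dflt) auto
qed

lemma expectation_pair_pmf_finite:
  fixes F :: "'a \<times> 'b \<Rightarrow> real"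
  assumes A: "finite (set_pmf A)" and B: "finite (set_pmf B)"
  shows "measure_pmf.expectation (pair_pmf A B) F =
    measure_pmf.expectation A (\<lambda>a. measure_pmf.expectation B (\<lambda>b. F (a, b)))"
proof -
  have "measure_pmf.expectation (pair_pmf A B) F =
      (\<Sum>x\<in>set_pmf A \<times> set_pmf B. pmf (pair_pmf A B) x *\<^sub>R F x)"
    using A B by (intro integral_measure_pmf) auto
  also have "\<dots> = (\<Sum>a\<in>set_pmf A. \<Sum>b\<in>set_pmf B. pmf A a * (pmf B b * F (a, b)))"
    by (subst sum.cartesian_product) (auto intro!: sum.cong simp: pmf_pair mult.assoc)
  also have "\<dots> = (\<Sum>a\<in>set_pmf A. pmf A a *\<^sub>R (\<Sum>b\<in>set_pmf B. pmf B b *\<^sub>R F (a, b)))"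
    by (simp add: sum_distrib_left)
  also have "\<dots> = measure_pmf.expectation A (\<lambda>a. measure_pmf.expectation B (\<lambda>b. F (a, b)))"
    using A B
    by (simp add: integral_measure_pmf[of "set_pmf A"] integral_measure_pmf[of "set_pmf B"])
  finally show ?thesis .
qed

lemma expectation_arrivals_Suc:
  fixes f :: "(nat \<Rightarrow> real \<times> (nat \<Rightarrow> real)) \<Rightarrow> real"
  assumes "finite (set_pmf D)"
  shows "measure_pmf.expectation (arrivals (Suc n) D) f =
    measure_pmf.expectation D (\<lambda>y. measure_pmf.expectation (arrivals n D) (\<lambda>\<omega>. f (\<omega> (n := y))))"
proof -
  have "arrivals (Suc n) D = map_pmf (\<lambda>(y, \<omega>). \<omega> (n := y)) (pair_pmf D (arrivals n D))"
    unfolding arrivals_def lessThan_Suc by (rule Pi_pmf_insert) auto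
  then show ?thesis
    using assms finite_set_pmf_arrivals[OF assms]
    by (simp add: expectation_pair_pmf_finite case_prod_beta')
qed

definition hard_dist :: "(real \<times> (nat \<Rightarrow> real)) pmf" where
  "hard_dist = pmf_of_set {(1, \<lambda>_. 1), (3, \<lambda>_. 1)}"

lemma set_pmf_hard_dist: "set_pmf hard_dist = {(1, \<lambda>_. 1), (3, \<lambda>_. 1)}"
  by (simp add: hard_dist_def)

lemma expectation_hard_dist:
  fixes f :: "real \<times> (nat \<Rightarrow> real) \<Rightarrow> real"
  shows "measure_pmf.expectation hard_dist f = (f (1, \<lambda>_. 1) + f (3, \<lambda>_. 1)) / 2"
  by (simp add: hard_dist_def integral_pmf_of_set)

lemma valid_instance_hard_dist: "valid_instance 1 (\<lambda>_. 2) hard_dist"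
  by (simp add: valid_instance_def set_pmf_hard_dist)

lemma set_pmf_arrivals_hard_dist:
  assumes "\<omega> \<in> set_pmf (arrivals n hard_dist)" "t < n"
  shows "fst (\<omega> t) \<ge> 1" "snd (\<omega> t) = (\<lambda>_. 1)"
  using set_pmf_arrivals[OF assms] by (auto simp: set_pmf_hard_dist)

lemma integrable_arrivals_hard_dist [simp]:
  fixes f :: "(nat \<Rightarrow> real \<times> (nat \<Rightarrow> real)) \<Rightarrow> real"
  shows "integrable (measure_pmf (arrivals n hard_dist)) f"
  by (intro integrable_measure_pmf_finite finite_set_pmf_arrivals) (simp add: set_pmf_hard_dist)

definition budget_walk :: "nat \<Rightarrow> (nat \<Rightarrow> real \<times> (nat \<Rightarrow> real)) \<Rightarrow> real" where
  "budget_walk n \<omega> = (\<Sum>t<n. fst (\<omega> t) - 2)"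

lemma sum_budgets_eq: "(\<Sum>t<n. fst (\<omega> t)) = budget_walk n \<omega> + 2 * real n"
  by (simp add: budget_walk_def sum_subtractf)

lemma expectation_budget_walk_Suc:
  fixes h :: "real \<Rightarrow> real"
  shows "measure_pmf.expectation (arrivals (Suc n) hard_dist) (\<lambda>\<omega>. h (budget_walk (Suc n) \<omega>)) =
    (measure_pmf.expectation (arrivals n hard_dist) (\<lambda>\<omega>. h (budget_walk n \<omega> - 1)) +
     measure_pmf.expectation (arrivals n hard_dist) (\<lambda>\<omega>. h (budget_walk n \<omega> + 1))) / 2"
proof -
  have "budget_walk (Suc n) (\<omega> (n := y)) = budget_walk n \<omega> + (fst y - 2)" for \<omega> y
    by (simp add: budget_walk_def)
  then show ?thesis
    by (simp add: expectation_arrivals_Suc set_pmf_hard_dist expectation_hard_dist)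
qed

lemma expectation_budget_walk: "measure_pmf.expectation (arrivals n hard_dist) (budget_walk n) = 0"
proof (induction n)
  case 0
  then show ?case by (simp add: budget_walk_def)
next
  case (Suc n)
  then show ?case
    using expectation_budget_walk_Suc[where h = "\<lambda>z. z"] by simp
qed

lemma expectation_budget_walk_sq:
  "measure_pmf.expectation (arrivals n hard_dist) (\<lambda>\<omega>. budget_walk n \<omega> ^ 2) = real n"
proof (induction n)
  case 0
  then show ?case by (simp add: budget_walk_def)
next
  case (Suc n)
  let ?E = "measure_pmf.expectation (arrivals n hard_dist)"
  have avg: "((z - 1) ^ 2 + (z + 1) ^ 2) / 2 = z ^ 2 + 1" for z :: real
    by (simp add: power2_eq_square field_simps)
  have "measure_pmf.expectation (arrivals (Suc n) hard_dist) (\<lambda>\<omega>. budget_walk (Suc n) \<omega> ^ 2) =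
      ?E (\<lambda>\<omega>. ((budget_walk n \<omega> - 1) ^ 2 + (budget_walk n \<omega> + 1) ^ 2) / 2)"
    by (simp add: expectation_budget_walk_Suc[where h = "\<lambda>z. z ^ 2"])
  also have "\<dots> = ?E (\<lambda>\<omega>. budget_walk n \<omega> ^ 2 + 1)"
    by (simp only: avg)
  finally show ?case
    using Suc by simp
qed

lemma expectation_budget_walk_pow4:
  "measure_pmf.expectation (arrivals n hard_dist) (\<lambda>\<omega>. budget_walk n \<omega> ^ 4) =
    3 * real n ^ 2 - 2 * real n"
proof (induction n)
  case 0
  then show ?case by (simp add: budget_walk_def)
next
  case (Suc n)
  let ?E = "measure_pmf.expectation (arrivals n hard_dist)"
  have avg: "((z - 1) ^ 4 + (z + 1) ^ 4) / 2 = z ^ 4 + 6 * z ^ 2 + 1" for z :: real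
    by (simp add: power4_eq_xxxx power2_eq_square field_simps)
  have "measure_pmf.expectation (arrivals (Suc n) hard_dist) (\<lambda>\<omega>. budget_walk (Suc n) \<omega> ^ 4) =
      ?E (\<lambda>\<omega>. ((budget_walk n \<omega> - 1) ^ 4 + (budget_walk n \<omega> + 1) ^ 4) / 2)"
    by (simp add: expectation_budget_walk_Suc[where h = "\<lambda>z. z ^ 4"])
  also have "\<dots> = ?E (\<lambda>\<omega>. budget_walk n \<omega> ^ 4 + 6 * budget_walk n \<omega> ^ 2 + 1)"
    by (simp only: avg)
  also have "\<dots> = (3 * real n ^ 2 - 2 * real n) + 6 * real n + 1"
    using Suc expectation_budget_walk_sq[of n] by simp
  finally show ?case
    by (simp add: power2_eq_square algebra_simps)
qed

lemma sq_le_abs_plus_pow4: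
  fixes z t :: real
  assumes "t > 0"
  shows "z ^ 2 \<le> t * \<bar>z\<bar> + z ^ 4 / t ^ 2"
proof (cases "\<bar>z\<bar> \<le> t")
  case True
  then have "\<bar>z\<bar> * \<bar>z\<bar> \<le> t * \<bar>z\<bar>"
    by (rule mult_right_mono) simp
  moreover have "z ^ 4 / t ^ 2 \<ge> 0"
    by simp
  ultimately show ?thesis
    unfolding power2_eq_square by linarith
next
  case False
  then have "t ^ 2 \<le> z ^ 2"
    using power_mono[of t "\<bar>z\<bar>" 2] assms by simp
  then have "z ^ 2 * t ^ 2 \<le> z ^ 2 * z ^ 2"
    by (rule mult_left_mono) simp
  then have "z ^ 2 \<le> z ^ 4 / t ^ 2"
    using assms by (simp add: pos_le_divide_eq flip: power_add)
  moreover have "t * \<bar>z\<bar> \<ge> 0"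
    using assms by simp
  ultimately show ?thesis
    by linarith
qed

lemma expectation_abs_budget_walk:
  "2 * sqrt (real n) / 9 \<le> measure_pmf.expectation (arrivals n hard_dist) (\<lambda>\<omega>. \<bar>budget_walk n \<omega>\<bar>)"
proof (cases "n = 0")
  case True
  then show ?thesis by (simp add: budget_walk_def)
next
  case False
  let ?E = "measure_pmf.expectation (arrivals n hard_dist)"
  define s where "s = sqrt (real n)"
  have "s > 0" and n_eq: "real n = s ^ 2"
    using False by (simp_all add: s_def)
  \<comment> \<open>the fourth moment caps the weight of large values, so the second moment forces \<open>E \<bar>Z\<bar>\<close> up\<close>
  have "real n = ?E (\<lambda>\<omega>. budget_walk n \<omega> ^ 2)"
    by (simp add: expectation_budget_walk_sq)
  also have "\<dots> \<le> ?E (\<lambda>\<omega>. 3 * s * \<bar>budget_walk n \<omega>\<bar> + budget_walk n \<omega> ^ 4 / (3 * s) ^ 2)"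
    using \<open>s > 0\<close> by (intro integral_mono integrable_arrivals_hard_dist sq_le_abs_plus_pow4) simp
  also have "\<dots> = 3 * s * ?E (\<lambda>\<omega>. \<bar>budget_walk n \<omega>\<bar>) + (3 * real n ^ 2 - 2 * real n) / (9 * real n)"
    by (simp add: expectation_budget_walk_pow4 n_eq power_mult_distrib)
  also have "\<dots> \<le> 3 * s * ?E (\<lambda>\<omega>. \<bar>budget_walk n \<omega>\<bar>) + real n / 3"
    using False by (simp add: field_simps power2_eq_square)
  finally have "2 * real n / 9 \<le> s * ?E (\<lambda>\<omega>. \<bar>budget_walk n \<omega>\<bar>)"
    by linarith
  then have "s * (2 * s / 9) \<le> s * ?E (\<lambda>\<omega>. \<bar>budget_walk n \<omega>\<bar>)"
    by (simp add: n_eq power2_eq_square)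
  then show ?thesis
    using \<open>s > 0\<close> unfolding s_def by (simp add: mult_le_cancel_left_pos)
qed

lemma expectation_pos_part_budget_walk:
  "sqrt (real n) / 9 \<le> measure_pmf.expectation (arrivals n hard_dist) (\<lambda>\<omega>. max (budget_walk n \<omega>) 0)"
proof -
  have "(\<lambda>\<omega>. max (budget_walk n \<omega>) 0) = (\<lambda>\<omega>. (\<bar>budget_walk n \<omega>\<bar> + budget_walk n \<omega>) / 2)"
    by (rule ext) auto
  then have "measure_pmf.expectation (arrivals n hard_dist) (\<lambda>\<omega>. max (budget_walk n \<omega>) 0) =
      measure_pmf.expectation (arrivals n hard_dist) (\<lambda>\<omega>. \<bar>budget_walk n \<omega>\<bar>) / 2"
    using expectation_budget_walk[of n] by simp
  then show ?thesis
    using expectation_abs_budget_walk[of n] by simp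
qed

lemma admissible_price_hard_dist_pos:
  assumes "admissible_price 1 hard_dist p"
  shows "p 0 > 0"
proof -
  obtain x where "user_optimal 1 p 1 (\<lambda>_. 1) x"
    using assms by (auto simp: admissible_price_def set_pmf_hard_dist)
  then show ?thesis
    by (rule user_optimal_price_pos) simp_all
qed

lemma consumed_hard_dist:
  assumes "valid_response 1 sel" "p 0 > 0" "\<omega> \<in> set_pmf (arrivals n hard_dist)" "t < n"
  shows "consumed sel p \<omega> t 0 = fst (\<omega> t) / p 0"
  using valid_response_one_good[of sel p "snd (\<omega> t)" "fst (\<omega> t)"]
    set_pmf_arrivals_hard_dist[OF assms(3,4)] assms(1,2)
  by (simp add: consumed_def)

lemma one_minus_inverse_le_ln:
  fixes x :: real
  assumes "x > 0"
  shows "1 - 1 / x \<le> ln x"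
  using ln_le_minus_one[of "1 / x"] assms by (simp add: ln_div)

lemma objective_gap_hard_dist_ge:
  assumes sel: "valid_response 1 sel" and "p 0 > 0" "n \<ge> 1"
    and \<omega>: "\<omega> \<in> set_pmf (arrivals n hard_dist)"
  shows "(\<Sum>t<n. fst (\<omega> t)) * ln (2 * real n * p 0 / (\<Sum>t<n. fst (\<omega> t))) \<le>
    offline_opt 1 (\<lambda>j. real n * 2) n \<omega> - online_obj 1 n sel p \<omega>"
proof -
  let ?S = "\<Sum>t<n. fst (\<omega> t)"
  note budgets = set_pmf_arrivals_hard_dist[OF \<omega>]
  have "?S > 0"
    using budgets \<open>n \<ge> 1\<close>
    by (intro sum_pos) (auto simp: lessThan_empty_iff intro: less_le_trans[OF zero_less_one])
  have "fst (\<omega> t) * ln (real n * 2 * fst (\<omega> t) / ?S) - fst (\<omega> t) * ln (fst (\<omega> t) / p 0) =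
      fst (\<omega> t) * ln (2 * real n * p 0 / ?S)" if "t < n" for t
    using budgets[OF that] \<open>?S > 0\<close> \<open>p 0 > 0\<close> \<open>n \<ge> 1\<close>
    by (simp add: ln_div ln_mult algebra_simps)
  then have "(\<Sum>t<n. fst (\<omega> t) * ln (real n * 2 * fst (\<omega> t) / ?S)) - online_obj 1 n sel p \<omega> =
      ?S * ln (2 * real n * p 0 / ?S)"
    unfolding online_obj_def sum_subtractf[symmetric] sum_distrib_right
    using consumed_hard_dist[of sel p \<omega> n] sel \<open>p 0 > 0\<close> \<omega> budgets by (intro sum.cong) simp_all
  moreover have "(\<Sum>t<n. fst (\<omega> t) * ln (real n * 2 * fst (\<omega> t) / ?S)) \<le>
      offline_opt 1 (\<lambda>j. real n * 2) n \<omega>"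
    using budgets \<open>n \<ge> 1\<close>
    by (intro offline_opt_one_good_ge) (auto intro: less_le_trans[OF zero_less_one])
  ultimately show ?thesis
    by linarith
qed

lemma regret_hard_dist_ge:
  assumes sel: "valid_response 1 sel" and "p 0 > 0" "n \<ge> 1"
  shows "2 * real n - (4 * real n + 1) / (2 * p 0) \<le> regret 1 (\<lambda>_. 2) hard_dist n sel p"
proof -
  let ?c = "2 * real n * p 0"
  let ?S = "\<lambda>\<omega>. \<Sum>t<n. fst (\<omega> t)"
  let ?E = "measure_pmf.expectation (arrivals n hard_dist)"
  have "?c > 0"
    using assms by simp
  have "?S \<omega> - ?S \<omega> ^ 2 / ?c \<le> offline_opt 1 (\<lambda>j. real n * 2) n \<omega> - online_obj 1 n sel p \<omega>"
    if \<omega>: "\<omega> \<in> set_pmf (arrivals n hard_dist)" for \<omega>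
  proof -
    have "?S \<omega> \<ge> 0"
      using set_pmf_arrivals_hard_dist(1)[OF \<omega>]
      by (intro sum_nonneg) (auto intro: order_trans[OF zero_le_one])
    then have "?S \<omega> * (1 - ?S \<omega> / ?c) \<le> ?S \<omega> * ln (?c / ?S \<omega>)"
      using one_minus_inverse_le_ln[of "?c / ?S \<omega>"] \<open>?c > 0\<close>
      by (cases "?S \<omega> = 0") (simp_all add: mult_left_mono)
    then show ?thesis
      using objective_gap_hard_dist_ge[of sel p n \<omega>] sel \<open>p 0 > 0\<close> \<open>n \<ge> 1\<close> \<omega>
      by (simp add: power2_eq_square right_diff_distrib)
  qed
  then have "?E (\<lambda>\<omega>. ?S \<omega> - ?S \<omega> ^ 2 / ?c) \<le> regret 1 (\<lambda>_. 2) hard_dist n sel p"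
    unfolding regret_def by (intro integral_mono_AE AE_pmfI) simp_all
  moreover have "?E (\<lambda>\<omega>. ?S \<omega> - ?S \<omega> ^ 2 / ?c) =
      ?E (\<lambda>\<omega>. (1 - 4 * real n / ?c) * budget_walk n \<omega> + 2 * real n - budget_walk n \<omega> ^ 2 / ?c
        - 4 * real n ^ 2 / ?c)"
    using \<open>p 0 > 0\<close> \<open>n \<ge> 1\<close> by (intro Bochner_Integration.integral_cong)
      (simp_all add: sum_budgets_eq power2_eq_square field_simps)
  also have "\<dots> = 2 * real n - (4 * real n ^ 2 + real n) / ?c"
    by (simp add: expectation_budget_walk expectation_budget_walk_sq add_divide_distrib)
  moreover have "(4 * real n ^ 2 + real n) / ?c = (4 * real n + 1) / (2 * p 0)"
    using \<open>n \<ge> 1\<close> \<open>p 0 > 0\<close> by (simp add: power2_eq_square field_simps)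
  ultimately show ?thesis
    by simp
qed

lemma excess_demand_hard_dist:
  assumes sel: "valid_response 1 sel" and "p 0 > 0"
    and \<omega>: "\<omega> \<in> set_pmf (arrivals n hard_dist)"
  shows "sqrt (\<Sum>j<1. (max 0 ((\<Sum>t<n. consumed sel p \<omega> t j) - real n * 2))\<^sup>2) =
    max 0 ((budget_walk n \<omega> - 2 * real n * (p 0 - 1)) / p 0)"
proof -
  have "(\<Sum>t<n. consumed sel p \<omega> t 0) = (\<Sum>t<n. fst (\<omega> t) / p 0)"
    using consumed_hard_dist[of sel p \<omega> n] sel \<open>p 0 > 0\<close> \<omega> by (intro sum.cong) simp_all
  also have "\<dots> = real n * 2 + (budget_walk n \<omega> - 2 * real n * (p 0 - 1)) / p 0"
    using \<open>p 0 > 0\<close> by (simp add: sum_divide_distrib[symmetric] sum_budgets_eq field_simps)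
  finally show ?thesis
    by simp
qed

lemma violation_hard_dist_ge:
  assumes sel: "valid_response 1 sel" and "p 0 > 0"
  shows "(sqrt (real n) / 9 - 2 * real n * max (p 0 - 1) 0) / p 0 \<le>
    violation 1 (\<lambda>_. 2) hard_dist n sel p"
proof -
  let ?a = "2 * real n * (p 0 - 1)" and ?b = "2 * real n * max (p 0 - 1) 0"
  let ?E = "measure_pmf.expectation (arrivals n hard_dist)"
  have "max z 0 - max a 0 \<le> max 0 (z - a)" for z a :: real
    by (simp add: max_def)
  then have numerator_le: "max (budget_walk n \<omega>) 0 - ?b \<le> max 0 (budget_walk n \<omega> - ?a)" for \<omega>
    by (simp add: max_mult_distrib_left)
  have "(max (budget_walk n \<omega>) 0 - ?b) / p 0 \<le> max 0 ((budget_walk n \<omega> - ?a) / p 0)" for \<omega>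
  proof -
    have "(max (budget_walk n \<omega>) 0 - ?b) / p 0 \<le> max 0 (budget_walk n \<omega> - ?a) / p 0"
      using numerator_le \<open>p 0 > 0\<close> by (intro divide_right_mono) simp_all
    also have "\<dots> = max 0 ((budget_walk n \<omega> - ?a) / p 0)"
      using \<open>p 0 > 0\<close> by (simp add: max_divide_distrib_right)
    finally show ?thesis .
  qed
  then have "?E (\<lambda>\<omega>. (max (budget_walk n \<omega>) 0 - ?b) / p 0) \<le> violation 1 (\<lambda>_. 2) hard_dist n sel p"
    unfolding violation_def using excess_demand_hard_dist[of sel p] sel \<open>p 0 > 0\<close>
    by (intro integral_mono_AE AE_pmfI) simp_all
  moreover have "?E (\<lambda>\<omega>. (max (budget_walk n \<omega>) 0 - ?b) / p 0) =
      (?E (\<lambda>\<omega>. max (budget_walk n \<omega>) 0) - ?b) / p 0"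
    by simp
  moreover have "(sqrt (real n) / 9 - ?b) / p 0 \<le> (?E (\<lambda>\<omega>. max (budget_walk n \<omega>) 0) - ?b) / p 0"
    using expectation_pos_part_budget_walk[of n] \<open>p 0 > 0\<close> by (simp add: divide_right_mono)
  ultimately show ?thesis
    by linarith
qed

text \<open>Here \<open>s\<close> stands for \<open>sqrt n\<close>; the two terms are the lower bounds on regret and violation at price \<open>P\<close>.\<close>

lemma static_price_tradeoff:
  fixes s P :: real
  assumes "s \<ge> 18" "P > 0"
  shows "s / 72 \<le> max (2 * s\<^sup>2 - (4 * s\<^sup>2 + 1) / (2 * P)) ((s / 9 - 2 * s\<^sup>2 * max (P - 1) 0) / P)"
proof (cases "P \<ge> 1 + 1 / (36 * s)")
  case True
  have "(4 * s\<^sup>2 + 1) / (2 * P) \<le> (4 * s\<^sup>2 + 1) / (2 * (1 + 1 / (36 * s)))"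
    using True assms by (intro divide_left_mono) (simp_all add: add_pos_nonneg)
  also have "\<dots> \<le> 2 * s\<^sup>2 - s / 72"
    using assms by (simp add: field_simps power2_eq_square)
  finally show ?thesis
    by linarith
next
  case False
  have "1 / (36 * s) \<le> 1"
    using assms by simp
  then have "P \<le> 2"
    using False by linarith
  have "2 * s\<^sup>2 * max (P - 1) 0 \<le> s / 18"
    using False assms by (auto simp: max_def field_simps power2_eq_square)
  then have "s / 18 / P \<le> (s / 9 - 2 * s\<^sup>2 * max (P - 1) 0) / P"
    using assms by (intro divide_right_mono) simp_all
  moreover have "s / 18 / 2 \<le> s / 18 / P"
    using \<open>P \<le> 2\<close> assms by (intro divide_left_mono) simp_all
  ultimately have "s / 72 \<le> (s / 9 - 2 * s\<^sup>2 * max (P - 1) 0) / P"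
    using assms by linarith
  then show ?thesis
    by (rule order_trans[OF _ max.cobounded2])
qed

lemma static_price_hard_dist_ge:
  assumes "valid_response 1 sel" "admissible_price 1 hard_dist p" "n \<ge> 324"
  shows "sqrt (real n) / 72 \<le>
    max (regret 1 (\<lambda>_. 2) hard_dist n sel p) (violation 1 (\<lambda>_. 2) hard_dist n sel p)"
proof -
  have price: "p 0 > 0"
    using assms(2) by (rule admissible_price_hard_dist_pos)
  have "sqrt (real n) \<ge> 18"
    using assms(3) real_le_rsqrt[of 18 "real n"] by simp
  from static_price_tradeoff[OF this price]
  have "sqrt (real n) / 72 \<le> max (2 * real n - (4 * real n + 1) / (2 * p 0))
      ((sqrt (real n) / 9 - 2 * real n * max (p 0 - 1) 0) / p 0)"
    by simp
  also have "\<dots> \<le> max (regret 1 (\<lambda>_. 2) hard_dist n sel p) (violation 1 (\<lambda>_. 2) hard_dist n sel p)"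
    using regret_hard_dist_ge violation_hard_dist_ge assms(1,3) price by (intro max.mono) simp_all
  finally show ?thesis .
qed

theorem theorem1:
  shows "\<exists>(m::nat) (d::nat \<Rightarrow> real) (D::(real \<times> (nat \<Rightarrow> real)) pmf).
    valid_instance m d D \<and>
    (\<forall>sel. valid_response m sel \<longrightarrow>
      (\<forall>P :: nat \<Rightarrow> nat \<Rightarrow> real. (\<forall>n. admissible_price m D (P n)) \<longrightarrow>
         (\<lambda>n. max (regret m d D n sel (P n)) (violation m d D n sel (P n)))
           \<in> \<Omega>(\<lambda>n. sqrt (real n))))"
proof (intro exI conjI allI impI)
  show "valid_instance 1 (\<lambda>_. 2) hard_dist"
    by (rule valid_instance_hard_dist)
next
  fix sel and P :: "nat \<Rightarrow> nat \<Rightarrow> real"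
  assume sel: "valid_response 1 sel" and adm: "\<forall>n. admissible_price 1 hard_dist (P n)"
  let ?max = "\<lambda>n. max (regret 1 (\<lambda>_. 2) hard_dist n sel (P n))
    (violation 1 (\<lambda>_. 2) hard_dist n sel (P n))"
  show "?max \<in> \<Omega>(\<lambda>n. sqrt (real n))"
  proof (rule landau_omega.bigI)
    show "eventually (\<lambda>n. 1 / 72 * norm (sqrt (real n)) \<le> norm (?max n)) at_top"
    proof (rule eventually_mono[OF eventually_ge_at_top[of 324]])
      fix n :: nat
      assume "n \<ge> 324"
      then have bound: "sqrt (real n) / 72 \<le> ?max n"
        by (rule static_price_hard_dist_ge[OF sel adm[rule_format]])
      then have "0 \<le> ?max n"
        by (rule order_trans[rotated]) simp
      then show "1 / 72 * norm (sqrt (real n)) \<le> norm (?max n)"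
        using bound by simp
    qed
  qed simp
qed

end
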